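(* Let $X\in L^\infty$ and let $\mathcal{G}\subseteq\mathcal{H}$ be sub-$\sigma$-fields of $\mathcal{F}$. If $Y\in\mathbb{E}[X\mid\mathcal{H}]$ and $Z\in\mathbb{E}[Y\mid\mathcal{G}]$, then $Z\in\mathbb{E}[X\mid\mathcal{G}]$.
   Context: $\mathbb{K}$ is a local field with non-archimedean absolute value $|\cdot|$ satisfying $|x|=0 \iff x=0$, $|xy|=|x||y|$, $|x+y|\le|x|\vee|y|$. $(\Omega,\mathcal{F},\mathbb{P})$ is a probability space; all (in)equalities are a.s. $L^\infty$ is the space of $\mathbb{K}$-valued random variables $X$ with $\operatorname{ess\,sup}|X|<\infty$; $L^\infty(\mathcal{G})$ its $\mathcal{G}$-measurable subspace. For a non-negative real random variable $S$, $\operatorname{ess\,sup}\{S\mid\mathcal{G}\}:=\sup_{p\ge1}\mathbb{E}[S^p\mid\mathcal{G}]^{1/p}$ (usual real conditional expectation), $\|X\|_\mathcal{G}:=\operatorname{ess\,sup}\{|X|\mid\mathcal{G}\}$, and the conditional expectation is the set $\mathbb{E}[X\mid\mathcal{G}]:=\{Y\in L^\infty(\mathcal{G}): \|X-Y\|_\mathcal{G}\le\|X-Z\|_\mathcal{G}\text{ for all }Z\in L^\infty(\mathcal{G})\}$. *)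

theory Defs
  imports "HOL-Analysis.Analysis" "HOL-Probability.Probability"
begin

definition nonarch_abs :: "('k::field \<Rightarrow> real) \<Rightarrow> bool" where
  "nonarch_abs a \<longleftrightarrow>
     (\<forall>x. a x = 0 \<longleftrightarrow> x = 0) \<and>
     (\<forall>x y. a (x * y) = a x * a y) \<and>
     (\<forall>x y. a (x + y) \<le> max (a x) (a y))"

definition local_field_abs :: "('k::{field,metric_space} \<Rightarrow> real) \<Rightarrow> bool" where
  "local_field_abs a \<longleftrightarrow>
     nonarch_abs a \<and>
     (\<forall>x y. dist x y = a (x - y)) \<and>
     (\<exists>x. a x \<noteq> 0 \<and> a x \<noteq> 1) \<and>
     (\<forall>f::nat \<Rightarrow> 'k. Cauchy f \<longrightarrow> convergent f) \<and>
     locally_compact_space (euclidean :: 'k topology)"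

text \<open>L-infinity (w.r.t. M) of K-valued random variables measurable w.r.t. the
  sub-sigma-field G (take G = M for the full space).\<close>
definition Linf :: "'a measure \<Rightarrow> 'a measure \<Rightarrow> ('k::{field,metric_space} \<Rightarrow> real)
    \<Rightarrow> ('a \<Rightarrow> 'k) \<Rightarrow> bool" where
  "Linf M G a X \<longleftrightarrow> X \<in> borel_measurable G \<and> (\<exists>C. AE \<omega> in M. a (X \<omega>) \<le> C)"

definition cond_esssup :: "'a measure \<Rightarrow> 'a measure \<Rightarrow> ('a \<Rightarrow> real) \<Rightarrow> 'a \<Rightarrow> ereal" where
  "cond_esssup M G S \<omega> =
     (SUP p\<in>{1::nat..}. ereal (real_cond_exp M G (\<lambda>\<omega>. S \<omega> ^ p) \<omega> powr (1 / real p)))"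

definition cond_norm :: "'a measure \<Rightarrow> 'a measure \<Rightarrow> ('k \<Rightarrow> real) \<Rightarrow> ('a \<Rightarrow> 'k) \<Rightarrow> 'a \<Rightarrow> ereal" where
  "cond_norm M G a X = cond_esssup M G (\<lambda>\<omega>. a (X \<omega>))"

definition cond_exp_set :: "'a measure \<Rightarrow> 'a measure \<Rightarrow> ('k::{field,metric_space} \<Rightarrow> real)
    \<Rightarrow> ('a \<Rightarrow> 'k) \<Rightarrow> ('a \<Rightarrow> 'k) set" where
  "cond_exp_set M G a X =
     {Y. Linf M G a Y \<and>
         (\<forall>Z. Linf M G a Z \<longrightarrow>
            (AE \<omega> in M. cond_norm M G a (\<lambda>\<omega>. X \<omega> - Y \<omega>) \<omega>
                          \<le> cond_norm M G a (\<lambda>\<omega>. X \<omega> - Z \<omega>) \<omega>))}"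

end

theory Submission
  imports Defs
begin

(* For bounded S \<ge> 0, cond_esssup S is the least G-measurable majorant of S a.e.: a
  G-measurable Q \<ge> S bounds every E[S^p | G]^(1/p), while for T = cond_esssup S a
  conditional Markov inequality gives P(S > T + e | G) \<le> (T / (T + e))^p \<longrightarrow> 0. So for
  G-measurable Q, the conditional norm of U is at most Q iff |U| \<le> Q a.e.
  Given W in L\<infinity>(G), let Q be the conditional norm of X - W given G. As Q and W are also
  H-measurable, optimality of Y yields |X - Y| \<le> Q; by the ultrametric inequality
  |Y - W| \<le> Q, so optimality of Z yields |Y - Z| \<le> Q, and again |X - Z| \<le> Q, which says
  that the norm of X - Z given G is at most that of X - W. *)

lemma nonarch_abs_mult: "nonarch_abs a \<Longrightarrow> a (x * y) = a x * a y"
  unfolding nonarch_abs_def by blast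

lemma nonarch_abs_eq_0_iff: "nonarch_abs a \<Longrightarrow> a x = 0 \<longleftrightarrow> x = 0"
  unfolding nonarch_abs_def by blast

lemma nonarch_abs_diff_le_max:
  "nonarch_abs a \<Longrightarrow> a (x - z) \<le> max (a (x - y)) (a (y - z))"
  unfolding nonarch_abs_def by (metis diff_add_cancel add_diff_eq)

lemma nonarch_abs_diff_le_trans:
  assumes "nonarch_abs a" "ereal (a (x - y)) \<le> q" "ereal (a (y - z)) \<le> q"
  shows "ereal (a (x - z)) \<le> q"
proof -
  have "a (x - z) \<le> max (a (x - y)) (a (y - z))"
    by (rule nonarch_abs_diff_le_max[OF assms(1)])
  then have "ereal (a (x - z)) \<le> ereal (a (x - y)) \<or> ereal (a (x - z)) \<le> ereal (a (y - z))"
    by (simp add: le_max_iff_disj)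
  then show ?thesis using assms(2,3) order_trans by blast
qed

lemma nonarch_abs_one: "nonarch_abs a \<Longrightarrow> a 1 = 1"
  using nonarch_abs_mult[of a 1 1] nonarch_abs_eq_0_iff[of a 1] by simp

lemma nonarch_abs_inverse:
  assumes "nonarch_abs a"
  shows "a (inverse x) = inverse (a x)"
proof (cases "x = 0")
  case True
  then show ?thesis using nonarch_abs_eq_0_iff[OF assms, of 0] by simp
next
  case False
  then have "a x * a (inverse x) = 1"
    by (simp add: nonarch_abs_one[OF assms] flip: nonarch_abs_mult[OF assms])
  then show ?thesis by (simp add: inverse_unique)
qed

lemma nonarch_abs_power: "nonarch_abs a \<Longrightarrow> a (x ^ n) = a x ^ n"
  by (induction n) (simp_all add: nonarch_abs_one nonarch_abs_mult)

lemma local_field_abs_nonarch: "local_field_abs a \<Longrightarrow> nonarch_abs a"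
  unfolding local_field_abs_def by blast

lemma local_field_abs_dist: "local_field_abs a \<Longrightarrow> dist x y = a (x - y)"
  unfolding local_field_abs_def by blast

lemma local_field_abs_nonneg: "local_field_abs a \<Longrightarrow> 0 \<le> a x"
  by (metis local_field_abs_dist diff_zero zero_le_dist)

lemma local_field_abs_diff_commute: "local_field_abs a \<Longrightarrow> a (x - y) = a (y - x)"
  by (metis local_field_abs_dist dist_commute)

lemma local_field_abs_dist_mult:
  "local_field_abs a \<Longrightarrow> dist (w * x) (w * y) = a w * dist x y"
  by (simp add: local_field_abs_dist nonarch_abs_mult local_field_abs_nonarch
      flip: right_diff_distrib)

lemma local_field_abs_exists_gt_1:
  assumes "local_field_abs a"
  obtains c where "a c > 1"
proof -
  obtain x where x: "a x \<noteq> 0" "a x \<noteq> 1"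
    using assms unfolding local_field_abs_def by blast
  have pos: "0 < a x" using x(1) local_field_abs_nonneg[OF assms, of x] by simp
  show ?thesis
  proof (cases "a x < 1")
    case True
    have "a (inverse x) = inverse (a x)"
      by (rule nonarch_abs_inverse[OF local_field_abs_nonarch[OF assms]])
    then show ?thesis using that[of "inverse x"] one_less_inverse[OF pos True] by simp
  next
    case False
    then show ?thesis using that[of x] x(2) by simp
  qed
qed

lemma countable_dense_if_sigma_compact:
  fixes K :: "nat \<Rightarrow> 'a::metric_space set"
  assumes compact: "\<And>n. compact (K n)" and cover: "(\<Union>n. K n) = UNIV"
  obtains D :: "'a set" where "countable D" "closure D = UNIV"
proof -
  have "\<exists>P. finite P \<and> K n \<subseteq> (\<Union>x\<in>P. ball x (1 / Suc m))" for n m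
  proof -
    have "K n \<subseteq> (\<Union>x\<in>K n. ball x (1 / Suc m))" by auto
    then obtain P where "finite P" "K n \<subseteq> (\<Union>x\<in>P. ball x (1 / Suc m))"
      using compactE_image[OF compact[of n]] by (metis open_ball)
    then show ?thesis by blast
  qed
  then obtain P where P: "\<And>n m. finite (P n m)" "\<And>n m. K n \<subseteq> (\<Union>x\<in>P n m. ball x (1 / Suc m))"
    by metis
  define D where "D = (\<Union>n m. P n m)"
  have "x \<in> closure D" for x
    unfolding closure_approachable
  proof (intro allI impI)
    fix e :: real assume "e > 0"
    then obtain m where m: "1 / real (Suc m) < e" by (rule nat_approx_posE)
    obtain n where "x \<in> K n" using cover by blast
    then obtain d where "d \<in> P n m" "x \<in> ball d (1 / Suc m)" using P(2)[of n m] by blast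
    moreover have "d \<in> D" unfolding D_def using \<open>d \<in> P n m\<close> by blast
    ultimately show "\<exists>d\<in>D. dist d x < e" using m by (auto intro!: bexI[of _ d])
  qed
  then have "closure D = UNIV" by blast
  moreover have "countable D"
    unfolding D_def by (intro countable_UN countableI_type countable_finite P(1))
  ultimately show ?thesis using that by blast
qed

lemma local_field_abs_countable_dense:
  fixes a :: "'k::{field,metric_space} \<Rightarrow> real"
  assumes "local_field_abs a"
  obtains D :: "'k set" where "countable D" "closure D = UNIV"
proof -
  have abs: "nonarch_abs a" by (rule local_field_abs_nonarch[OF assms])
  obtain c where c: "a c > 1" using local_field_abs_exists_gt_1[OF assms] .
  have "locally_compact_space (euclidean :: 'k topology)"
    using assms unfolding local_field_abs_def by blast
  then have "\<exists>U K. open U \<and> compact K \<and> (0::'k) \<in> U \<and> U \<subseteq> K"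
    by (simp add: locally_compact_space_def flip: open_openin)
  then obtain U K :: "'k set" where UK: "open U" "compact K" "0 \<in> U" "U \<subseteq> K"
    by blast
  obtain e where e: "e > 0" "ball 0 e \<subseteq> U"
    using open_contains_ball_eq[OF UK(1)] UK(3) by blast
  have compact_scaled: "compact ((\<lambda>z. c ^ n * z) ` K)" for n
  proof (rule compact_continuous_image[OF _ UK(2)])
    have "lipschitz_on (a (c ^ n)) K (\<lambda>z. c ^ n * z)"
      by (rule lipschitz_onI)
        (simp_all add: local_field_abs_dist_mult[OF assms] local_field_abs_nonneg[OF assms])
    then show "continuous_on K (\<lambda>z. c ^ n * z)" by (rule lipschitz_on_continuous_on)
  qed
  have "y \<in> (\<Union>n. (\<lambda>z. c ^ n * z) ` K)" for y
  proof -
    obtain n where n: "a y / e < a c ^ n" using real_arch_pow[OF c] by blast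
    have pos: "0 < a c ^ n" using c by simp
    have "c ^ n \<noteq> 0" using c nonarch_abs_eq_0_iff[OF abs, of c] by auto
    have "dist 0 (inverse (c ^ n) * y) = a (inverse (c ^ n) * y)"
      using local_field_abs_dist[OF assms, of "inverse (c ^ n) * y" 0] by (simp add: dist_commute)
    also have "\<dots> = a y / a c ^ n"
      by (simp add: nonarch_abs_mult[OF abs] nonarch_abs_inverse[OF abs] nonarch_abs_power[OF abs]
          divide_inverse)
    also have "\<dots> < e" using n pos e by (simp add: field_simps)
    finally have "inverse (c ^ n) * y \<in> K" using e UK(4) by auto
    moreover have "y = c ^ n * (inverse (c ^ n) * y)" using \<open>c ^ n \<noteq> 0\<close> by simp
    ultimately show ?thesis by blast
  qed
  then have "(\<Union>n. (\<lambda>z. c ^ n * z) ` K) = UNIV" by blast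
  with compact_scaled show ?thesis by (rule countable_dense_if_sigma_compact[OF _ _ that])
qed

(* Without separability, dist (U \<omega>) (V \<omega>) need not be measurable: the Borel sets of the
  product are not generated by rectangles. The dense set D reduces it to the maps
  dist (U \<omega>) d with d fixed. *)
lemma borel_measurable_dist_if_countable_dense:
  fixes U V :: "'a \<Rightarrow> 'b::metric_space" and D :: "'b set"
  assumes D: "countable D" "closure D = UNIV"
    and U: "U \<in> borel_measurable M" and V: "V \<in> borel_measurable M"
  shows "(\<lambda>\<omega>. dist (U \<omega>) (V \<omega>)) \<in> borel_measurable M"
proof (unfold borel_measurable_iff_less, intro allI)
  fix t :: real
  have dist_less_iff: "dist x y < t \<longleftrightarrow> (\<exists>d\<in>D. dist x d + dist y d < t)" for x y :: 'b
  proof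
    assume "dist x y < t"
    then have "0 < (t - dist x y) / 2" by simp
    moreover have "x \<in> closure D" using D(2) by simp
    ultimately obtain d where "d \<in> D" "dist d x < (t - dist x y) / 2"
      unfolding closure_approachable by blast
    moreover have "dist y d \<le> dist x y + dist d x"
      using dist_triangle[of y d x] by (simp add: dist_commute)
    ultimately show "\<exists>d\<in>D. dist x d + dist y d < t"
      by (intro bexI[of _ d]) (simp_all add: dist_commute)
  next
    assume "\<exists>d\<in>D. dist x d + dist y d < t"
    then obtain d where "dist x d + dist y d < t" by blast
    then show "dist x y < t" using dist_triangle2[of x y d] by linarith
  qed
  have dist_point: "(\<lambda>\<omega>. dist (W \<omega>) d) \<in> borel_measurable M" if "W \<in> borel_measurable M" for W d
    by (rule measurable_compose[OF that]) (intro borel_measurable_continuous_onI continuous_intros)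
  have level_sets: "{\<omega> \<in> space M. dist (U \<omega>) d + dist (V \<omega>) d < t} \<in> sets M" for d
    using borel_measurable_add[OF dist_point[OF U] dist_point[OF V]]
    unfolding borel_measurable_iff_less by blast
  have "{\<omega> \<in> space M. dist (U \<omega>) (V \<omega>) < t} =
      (\<Union>d\<in>D. {\<omega> \<in> space M. dist (U \<omega>) d + dist (V \<omega>) d < t})"
    unfolding dist_less_iff by blast
  also have "\<dots> \<in> sets M"
    using D(1) level_sets by (rule sets.countable_UN'')
  finally show "{\<omega> \<in> space M. dist (U \<omega>) (V \<omega>) < t} \<in> sets M" .
qed

lemma borel_measurable_local_field_abs_diff:
  fixes a :: "'k::{field,metric_space} \<Rightarrow> real" and U V :: "'a \<Rightarrow> 'k"
  assumes "local_field_abs a" "U \<in> borel_measurable M" "V \<in> borel_measurable M"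
  shows "(\<lambda>\<omega>. a (U \<omega> - V \<omega>)) \<in> borel_measurable M"
proof -
  obtain D :: "'k set" where "countable D" "closure D = UNIV"
    using local_field_abs_countable_dense[OF assms(1)] .
  from borel_measurable_dist_if_countable_dense[OF this assms(2,3)] show ?thesis
    by (simp add: local_field_abs_dist[OF assms(1)])
qed

lemma Linf_subalgebra: "subalgebra N G \<Longrightarrow> Linf M G a W \<Longrightarrow> Linf M N a W"
  unfolding Linf_def using measurable_from_subalg by blast

lemma Linf_abs_diff:
  assumes "local_field_abs a" "Linf M M a U" "Linf M M a V"
  shows "(\<lambda>\<omega>. a (U \<omega> - V \<omega>)) \<in> borel_measurable M"
    and "\<exists>C. AE \<omega> in M. a (U \<omega> - V \<omega>) \<le> C"
proof -
  obtain CU CV where "AE \<omega> in M. a (U \<omega>) \<le> CU" "AE \<omega> in M. a (V \<omega>) \<le> CV"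
    using assms(2,3) unfolding Linf_def by blast
  then have "AE \<omega> in M. a (U \<omega> - V \<omega>) \<le> max CU CV"
  proof eventually_elim
    case (elim \<omega>)
    have "a (U \<omega> - V \<omega>) \<le> max (a (U \<omega> - 0)) (a (0 - V \<omega>))"
      by (rule nonarch_abs_diff_le_max[OF local_field_abs_nonarch[OF assms(1)]])
    also have "\<dots> = max (a (U \<omega>)) (a (V \<omega>))"
      using local_field_abs_diff_commute[OF assms(1), of 0 "V \<omega>"] by simp
    finally show ?case using elim by linarith
  qed
  then show "\<exists>C. AE \<omega> in M. a (U \<omega> - V \<omega>) \<le> C" ..
  show "(\<lambda>\<omega>. a (U \<omega> - V \<omega>)) \<in> borel_measurable M"
    using assms(2,3) unfolding Linf_def by (intro borel_measurable_local_field_abs_diff[OF assms(1)]) auto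
qed

lemma cond_esssup_measurable [measurable]: "cond_esssup M F S \<in> borel_measurable F"
  unfolding cond_esssup_def by measurable

lemma cond_esssup_nonneg: "0 \<le> cond_esssup M F S \<omega>"
  unfolding cond_esssup_def by (rule SUP_upper2[of 1]) auto

lemma powr_inverse_le_iff_le_power:
  fixes x b :: real
  assumes "0 \<le> x" "0 \<le> b" "0 < p"
  shows "x powr (1 / real p) \<le> b \<longleftrightarrow> x \<le> b ^ p"
proof -
  have "(x powr (1 / real p)) ^ p = x"
    using assms by (cases "x = 0") (simp_all add: powr_power)
  moreover have "x powr (1 / real p) \<le> b \<longleftrightarrow> (x powr (1 / real p)) ^ p \<le> b ^ p"
    using assms by simp
  ultimately show ?thesis by simp
qed

lemma nonpos_if_power_mult_le:
  fixes T e P :: real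
  assumes "0 \<le> T" "0 < e" and le: "\<And>p::nat. 1 \<le> p \<Longrightarrow> (T + e) ^ p * P \<le> T ^ p"
  shows "P \<le> 0"
proof -
  have "(\<lambda>p. (T / (T + e)) ^ p) \<longlonglongrightarrow> 0"
    using assms(1,2) by (intro LIMSEQ_power_zero) simp
  moreover have "P \<le> (T / (T + e)) ^ p" if "1 \<le> p" for p :: nat
  proof -
    have "0 < (T + e) ^ p" using assms(1,2) by simp
    then show ?thesis
      using le[OF that] by (simp add: power_divide pos_le_divide_eq mult.commute)
  qed
  ultimately show "P \<le> 0"
    by (intro LIMSEQ_le_const[of _ 0 P] exI[of _ 1]) auto
qed

lemma (in finite_measure) integrable_power_if_bounded:
  fixes f :: "'a \<Rightarrow> real"
  assumes "f \<in> borel_measurable M" "AE x in M. 0 \<le> f x" "AE x in M. f x \<le> C"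
  shows "integrable M (\<lambda>x. f x ^ p)"
proof (rule integrable_const_bound[where B = "C ^ p"])
  show "AE x in M. norm (f x ^ p) \<le> C ^ p"
    using assms(2,3) by eventually_elim (simp add: power_mono)
  show "(\<lambda>x. f x ^ p) \<in> borel_measurable M"
    using assms(1) by measurable
qed

context finite_measure_subalgebra
begin

lemma root_cond_exp_power_le:
  assumes S: "S \<in> borel_measurable M" "AE \<omega> in M. 0 \<le> S \<omega>" "AE \<omega> in M. S \<omega> \<le> B \<omega>"
    and B: "B \<in> borel_measurable F" "AE \<omega> in M. B \<omega> \<le> C"
    and "1 \<le> p"
  shows "AE \<omega> in M. real_cond_exp M F (\<lambda>\<omega>. S \<omega> ^ p) \<omega> powr (1 / real p) \<le> B \<omega>"
proof -
  have B_M: "B \<in> borel_measurable M" using measurable_from_subalg[OF subalg B(1)] .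
  have S_C: "AE \<omega> in M. S \<omega> \<le> C" using S(3) B(2) by eventually_elim simp
  have B_pos: "AE \<omega> in M. 0 \<le> B \<omega>" using S(2,3) by eventually_elim simp
  have int_S: "integrable M (\<lambda>\<omega>. S \<omega> ^ p)"
    using S(1,2) S_C by (rule integrable_power_if_bounded)
  have int_B: "integrable M (\<lambda>\<omega>. B \<omega> ^ p)"
    using B_M B_pos B(2) by (rule integrable_power_if_bounded)
  have "AE \<omega> in M. S \<omega> ^ p \<le> B \<omega> ^ p"
    using S(2,3) by eventually_elim (rule power_mono)
  then have mono: "AE \<omega> in M. real_cond_exp M F (\<lambda>\<omega>. S \<omega> ^ p) \<omega> \<le> real_cond_exp M F (\<lambda>\<omega>. B \<omega> ^ p) \<omega>"
    using int_S int_B by (rule real_cond_exp_mono)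
  have B_fixed: "AE \<omega> in M. real_cond_exp M F (\<lambda>\<omega>. B \<omega> ^ p) \<omega> = B \<omega> ^ p"
    using int_B B(1) by (intro real_cond_exp_F_meas) measurable
  have pos: "AE \<omega> in M. 0 \<le> real_cond_exp M F (\<lambda>\<omega>. S \<omega> ^ p) \<omega>"
    using S(1,2) by (intro real_cond_exp_pos) (auto elim: eventually_mono)
  show ?thesis
    using mono B_fixed pos B_pos
    by eventually_elim (use \<open>1 \<le> p\<close> in \<open>simp add: powr_inverse_le_iff_le_power\<close>)
qed

lemma cond_esssup_le_real:
  assumes S: "S \<in> borel_measurable M" "AE \<omega> in M. 0 \<le> S \<omega>" "AE \<omega> in M. S \<omega> \<le> B \<omega>"
    and B: "B \<in> borel_measurable F" "AE \<omega> in M. B \<omega> \<le> C"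
  shows "AE \<omega> in M. cond_esssup M F S \<omega> \<le> ereal (B \<omega>)"
proof -
  have "AE \<omega> in M. \<forall>p\<in>{1..}. real_cond_exp M F (\<lambda>\<omega>. S \<omega> ^ p) \<omega> powr (1 / real p) \<le> B \<omega>"
    using root_cond_exp_power_le[OF S B] by (subst AE_ball_countable) auto
  then show ?thesis
    unfolding cond_esssup_def by eventually_elim (auto intro!: SUP_least)
qed

lemma cond_esssup_le:
  assumes S: "S \<in> borel_measurable M" "AE \<omega> in M. 0 \<le> S \<omega>" "AE \<omega> in M. S \<omega> \<le> C"
    and Q: "Q \<in> borel_measurable F" "AE \<omega> in M. ereal (S \<omega>) \<le> Q \<omega>"
  shows "AE \<omega> in M. cond_esssup M F S \<omega> \<le> Q \<omega>"
proof -
  define B where "B \<omega> = real_of_ereal (min (Q \<omega>) (ereal C))" for \<omega>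
  have B_meas: "B \<in> borel_measurable F" unfolding B_def using Q(1) by measurable
  have bounds: "AE \<omega> in M. S \<omega> \<le> B \<omega> \<and> B \<omega> \<le> C \<and> ereal (B \<omega>) \<le> Q \<omega>"
    using S(2,3) Q(2)
  proof eventually_elim
    case (elim \<omega>)
    then show ?case by (cases "Q \<omega>") (auto simp: B_def min_def)
  qed
  have "AE \<omega> in M. cond_esssup M F S \<omega> \<le> ereal (B \<omega>)"
    using bounds by (intro cond_esssup_le_real[OF S(1,2) _ B_meas]) (auto elim: eventually_mono)
  then show ?thesis
    using bounds by eventually_elim (blast intro: order_trans)
qed

lemma real_cond_exp_markov_power:
  assumes S: "S \<in> borel_measurable M" "AE \<omega> in M. 0 \<le> S \<omega>" "AE \<omega> in M. S \<omega> \<le> C"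
    and U: "U \<in> borel_measurable F" "\<And>\<omega>. 0 \<le> U \<omega>" "AE \<omega> in M. U \<omega> \<le> C"
  shows "AE \<omega> in M. U \<omega> ^ p * real_cond_exp M F (indicator {\<omega> \<in> space M. U \<omega> < S \<omega>}) \<omega>
      \<le> real_cond_exp M F (\<lambda>\<omega>. S \<omega> ^ p) \<omega>"
proof -
  define A where "A = {\<omega> \<in> space M. U \<omega> < S \<omega>}"
  have U_M: "U \<in> borel_measurable M" using measurable_from_subalg[OF subalg U(1)] .
  have A: "A \<in> sets M" unfolding A_def using U_M S(1) by measurable
  have int_S: "integrable M (\<lambda>\<omega>. S \<omega> ^ p)"
    using S by (rule integrable_power_if_bounded)
  have "integrable M (\<lambda>\<omega>. U \<omega> ^ p)"
    using U_M U(2,3) by (intro integrable_power_if_bounded) auto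
  then have int_UA: "integrable M (\<lambda>\<omega>. U \<omega> ^ p * indicator A \<omega>)"
    by (rule integrable_real_mult_indicator[OF A])
  have "AE \<omega> in M. U \<omega> ^ p * indicator A \<omega> \<le> S \<omega> ^ p"
    using S(2) by eventually_elim (auto simp: A_def indicator_def U(2) intro: power_mono)
  then have "AE \<omega> in M. real_cond_exp M F (\<lambda>\<omega>. U \<omega> ^ p * indicator A \<omega>) \<omega>
      \<le> real_cond_exp M F (\<lambda>\<omega>. S \<omega> ^ p) \<omega>"
    using int_UA int_S by (rule real_cond_exp_mono)
  moreover have "AE \<omega> in M. real_cond_exp M F (\<lambda>\<omega>. U \<omega> ^ p * indicator A \<omega>) \<omega>
      = U \<omega> ^ p * real_cond_exp M F (indicator A) \<omega>"
    using U(1) A int_UA by (intro real_cond_exp_mult) auto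
  ultimately show ?thesis
    unfolding A_def[symmetric] by eventually_elim simp
qed

lemma AE_le_add_if_cond_exp_power_le:
  assumes S: "S \<in> borel_measurable M" "AE \<omega> in M. 0 \<le> S \<omega>" "AE \<omega> in M. S \<omega> \<le> C"
    and T: "T \<in> borel_measurable F" "\<And>\<omega>. 0 \<le> T \<omega>" "AE \<omega> in M. T \<omega> \<le> C"
    and power_le: "\<And>p. 1 \<le> p \<Longrightarrow> AE \<omega> in M. real_cond_exp M F (\<lambda>\<omega>. S \<omega> ^ p) \<omega> \<le> T \<omega> ^ p"
    and "0 < e"
  shows "AE \<omega> in M. S \<omega> \<le> T \<omega> + e"
proof -
  define A where "A = {\<omega> \<in> space M. T \<omega> + e < S \<omega>}"
  have T_M: "T \<in> borel_measurable M" using measurable_from_subalg[OF subalg T(1)] .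
  have A: "A \<in> sets M" unfolding A_def using T_M S(1) by measurable
  have S_Ce: "AE \<omega> in M. S \<omega> \<le> C + e" using S(3) \<open>0 < e\<close> by (auto elim: eventually_mono)
  have "AE \<omega> in M. (T \<omega> + e) ^ p * real_cond_exp M F (indicator A) \<omega> \<le> T \<omega> ^ p"
    if "1 \<le> p" for p
  proof -
    have "AE \<omega> in M. (T \<omega> + e) ^ p * real_cond_exp M F (indicator A) \<omega>
        \<le> real_cond_exp M F (\<lambda>\<omega>. S \<omega> ^ p) \<omega>"
      unfolding A_def using S(1,2) S_Ce T(1,3) T(2) \<open>0 < e\<close>
      by (intro real_cond_exp_markov_power) (auto elim: eventually_mono intro: add_nonneg_nonneg less_imp_le)
    then show ?thesis
      using power_le[OF that] by eventually_elim simp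
  qed
  then have "AE \<omega> in M. \<forall>p\<in>{1..}. (T \<omega> + e) ^ p * real_cond_exp M F (indicator A) \<omega> \<le> T \<omega> ^ p"
    by (subst AE_ball_countable) auto
  moreover have "AE \<omega> in M. 0 \<le> real_cond_exp M F (indicator A) \<omega>"
    using A by (intro real_cond_exp_pos) auto
  ultimately have "AE \<omega> in M. real_cond_exp M F (indicator A) \<omega> = 0"
    by eventually_elim (metis antisym nonpos_if_power_mult_le T(2) \<open>0 < e\<close> atLeast_iff)
  then have "integral\<^sup>L M (real_cond_exp M F (indicator A)) = 0"
    by (simp add: integral_eq_zero_AE)
  then have "measure M A = 0"
    using A real_cond_exp_int(2)[of "indicator A"] by (simp add: less_top[symmetric])
  then have "A \<in> null_sets M"
    using A by (simp add: emeasure_eq_measure null_setsI)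
  then show ?thesis
    by (rule AE_I') (auto simp: A_def)
qed

lemma AE_le_if_cond_exp_power_le:
  assumes S: "S \<in> borel_measurable M" "AE \<omega> in M. 0 \<le> S \<omega>" "AE \<omega> in M. S \<omega> \<le> C"
    and T: "T \<in> borel_measurable F" "\<And>\<omega>. 0 \<le> T \<omega>" "AE \<omega> in M. T \<omega> \<le> C"
    and power_le: "\<And>p. 1 \<le> p \<Longrightarrow> AE \<omega> in M. real_cond_exp M F (\<lambda>\<omega>. S \<omega> ^ p) \<omega> \<le> T \<omega> ^ p"
  shows "AE \<omega> in M. S \<omega> \<le> T \<omega>"
proof -
  have "AE \<omega> in M. \<forall>n. S \<omega> \<le> T \<omega> + inverse (real (Suc n))"
    by (subst AE_all_countable, intro allI AE_le_add_if_cond_exp_power_le[OF S T power_le]) simp_all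
  then show ?thesis
  proof eventually_elim
    case (elim \<omega>)
    have "(\<lambda>n. T \<omega> + inverse (real (Suc n))) \<longlonglongrightarrow> T \<omega>"
      using tendsto_add[OF tendsto_const LIMSEQ_inverse_real_of_nat] by simp
    then show ?case
      using elim by (intro LIMSEQ_le_const[of _ _ "S \<omega>"]) auto
  qed
qed

lemma cond_esssup_ge:
  assumes S: "S \<in> borel_measurable M" "AE \<omega> in M. 0 \<le> S \<omega>" "AE \<omega> in M. S \<omega> \<le> C"
  shows "AE \<omega> in M. ereal (S \<omega>) \<le> cond_esssup M F S \<omega>"
proof -
  define C' where "C' = max C 0"
  have S_C': "AE \<omega> in M. S \<omega> \<le> C'" using S(3) unfolding C'_def by eventually_elim simp
  have bounded: "AE \<omega> in M. cond_esssup M F S \<omega> \<le> ereal C'"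
    using S_C' by (intro cond_esssup_le[OF S]) (auto elim: eventually_mono)
  define T where "T \<omega> = real_of_ereal (cond_esssup M F S \<omega>)" for \<omega>
  have T_meas: "T \<in> borel_measurable F" unfolding T_def by measurable
  have T_pos: "0 \<le> T \<omega>" for \<omega>
    unfolding T_def using cond_esssup_nonneg by (rule real_of_ereal_pos)
  have T_eq: "AE \<omega> in M. cond_esssup M F S \<omega> = ereal (T \<omega>) \<and> T \<omega> \<le> C'"
    using bounded
  proof eventually_elim
    case (elim \<omega>)
    then show ?case
      using cond_esssup_nonneg[of M F S \<omega>] by (cases "cond_esssup M F S \<omega>") (auto simp: T_def)
  qed
  have "AE \<omega> in M. real_cond_exp M F (\<lambda>\<omega>. S \<omega> ^ p) \<omega> \<le> T \<omega> ^ p" if "1 \<le> p" for p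
  proof -
    have "AE \<omega> in M. 0 \<le> real_cond_exp M F (\<lambda>\<omega>. S \<omega> ^ p) \<omega>"
      using S(1,2) by (intro real_cond_exp_pos) (auto elim: eventually_mono)
    then show ?thesis
      using T_eq
    proof eventually_elim
      case (elim \<omega>)
      have "ereal (real_cond_exp M F (\<lambda>\<omega>. S \<omega> ^ p) \<omega> powr (1 / real p)) \<le> cond_esssup M F S \<omega>"
        unfolding cond_esssup_def using that by (intro SUP_upper) simp
      then show ?case
        using elim that T_pos[of \<omega>] by (simp add: powr_inverse_le_iff_le_power)
    qed
  qed
  then have "AE \<omega> in M. S \<omega> \<le> T \<omega>"
    using T_eq by (intro AE_le_if_cond_exp_power_le[OF S(1,2) S_C' T_meas T_pos]) (auto elim: eventually_mono)
  then show ?thesis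
    using T_eq by eventually_elim simp
qed

lemma cond_esssup_le_iff:
  assumes S: "S \<in> borel_measurable M" "AE \<omega> in M. 0 \<le> S \<omega>" "AE \<omega> in M. S \<omega> \<le> C"
    and Q: "Q \<in> borel_measurable F"
  shows "(AE \<omega> in M. cond_esssup M F S \<omega> \<le> Q \<omega>) \<longleftrightarrow> (AE \<omega> in M. ereal (S \<omega>) \<le> Q \<omega>)"
proof
  assume "AE \<omega> in M. cond_esssup M F S \<omega> \<le> Q \<omega>"
  with cond_esssup_ge[OF S] show "AE \<omega> in M. ereal (S \<omega>) \<le> Q \<omega>"
    by eventually_elim (rule order_trans)
next
  assume "AE \<omega> in M. ereal (S \<omega>) \<le> Q \<omega>"
  then show "AE \<omega> in M. cond_esssup M F S \<omega> \<le> Q \<omega>"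
    by (rule cond_esssup_le[OF S Q])
qed

end

lemma finite_measure_subalgebra_if_prob_space:
  "prob_space M \<Longrightarrow> subalgebra M F \<Longrightarrow> finite_measure_subalgebra M F"
  by (simp add: finite_measure_subalgebra_def finite_measure_subalgebra_axioms_def prob_space_def)

lemma cond_norm_diff_le_iff:
  assumes "finite_measure_subalgebra M F" "local_field_abs a" "Linf M M a U" "Linf M M a V"
    and "Q \<in> borel_measurable F"
  shows "(AE \<omega> in M. cond_norm M F a (\<lambda>\<omega>. U \<omega> - V \<omega>) \<omega> \<le> Q \<omega>)
    \<longleftrightarrow> (AE \<omega> in M. ereal (a (U \<omega> - V \<omega>)) \<le> Q \<omega>)"
proof -
  obtain C where "AE \<omega> in M. a (U \<omega> - V \<omega>) \<le> C"
    using Linf_abs_diff(2)[OF assms(2-4)] ..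
  then show ?thesis
    unfolding cond_norm_def
    by (intro finite_measure_subalgebra.cond_esssup_le_iff[OF assms(1) Linf_abs_diff(1)[OF assms(2-4)] _ _ assms(5)])
      (simp_all add: local_field_abs_nonneg[OF assms(2)])
qed

lemma cond_exp_set_abs_diff_le:
  assumes H: "finite_measure_subalgebra M H" and a: "local_field_abs a" and X: "Linf M M a X"
    and Y: "Y \<in> cond_exp_set M H a X" and W: "Linf M H a W"
    and Q: "Q \<in> borel_measurable H" "AE \<omega> in M. ereal (a (X \<omega> - W \<omega>)) \<le> Q \<omega>"
  shows "AE \<omega> in M. ereal (a (X \<omega> - Y \<omega>)) \<le> Q \<omega>"
proof -
  have sub: "subalgebra M H" using H by (rule finite_measure_subalgebra.subalg)
  have YH: "Linf M H a Y" and Y_min: "AE \<omega> in M.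
      cond_norm M H a (\<lambda>\<omega>. X \<omega> - Y \<omega>) \<omega> \<le> cond_norm M H a (\<lambda>\<omega>. X \<omega> - W \<omega>) \<omega>"
    using Y W unfolding cond_exp_set_def by auto
  have YM: "Linf M M a Y" using YH by (rule Linf_subalgebra[OF sub])
  have WM: "Linf M M a W" using W by (rule Linf_subalgebra[OF sub])
  have "AE \<omega> in M. cond_norm M H a (\<lambda>\<omega>. X \<omega> - W \<omega>) \<omega> \<le> Q \<omega>"
    using cond_norm_diff_le_iff[OF H a X WM Q(1)] Q(2) by simp
  with Y_min have "AE \<omega> in M. cond_norm M H a (\<lambda>\<omega>. X \<omega> - Y \<omega>) \<omega> \<le> Q \<omega>"
    by eventually_elim (rule order_trans)
  then show ?thesis using cond_norm_diff_le_iff[OF H a X YM Q(1)] by simp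
qed

theorem mainTheorem15:
  fixes M G H :: "'a measure" and a :: "'k::{field,metric_space} \<Rightarrow> real"
    and X Y Z :: "'a \<Rightarrow> 'k"
  assumes "prob_space M"
    and "local_field_abs a"
    and "subalgebra M G" and "subalgebra M H" and "sets G \<subseteq> sets H"
    and "Linf M M a X"
    and "Y \<in> cond_exp_set M H a X"
    and "Z \<in> cond_exp_set M G a Y"
  shows "Z \<in> cond_exp_set M G a X"
proof -
  have G: "finite_measure_subalgebra M G" and H: "finite_measure_subalgebra M H"
    using assms(1,3,4) by (simp_all add: finite_measure_subalgebra_if_prob_space)
  have HG: "subalgebra H G" using assms(3-5) unfolding subalgebra_def by auto
  have ultra: "nonarch_abs a" using assms(2) by (rule local_field_abs_nonarch)
  have Y: "Linf M H a Y" and Z: "Linf M G a Z" using assms(7,8) unfolding cond_exp_set_def by blast+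
  have YM: "Linf M M a Y" and ZM: "Linf M M a Z"
    using Linf_subalgebra[OF assms(4) Y] Linf_subalgebra[OF assms(3) Z] .
  show ?thesis
    unfolding cond_exp_set_def
  proof (intro CollectI conjI allI impI Z)
    fix W assume W: "Linf M G a W"
    have WM: "Linf M M a W" using W by (rule Linf_subalgebra[OF assms(3)])
    define Q where "Q = cond_norm M G a (\<lambda>\<omega>. X \<omega> - W \<omega>)"
    have QG: "Q \<in> borel_measurable G" unfolding Q_def cond_norm_def by measurable
    have XW: "AE \<omega> in M. ereal (a (X \<omega> - W \<omega>)) \<le> Q \<omega>"
      using cond_norm_diff_le_iff[OF G assms(2,6) WM QG] by (simp add: Q_def)
    have XY: "AE \<omega> in M. ereal (a (X \<omega> - Y \<omega>)) \<le> Q \<omega>"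
      using Linf_subalgebra[OF HG W] measurable_from_subalg[OF HG QG] XW
      by (rule cond_exp_set_abs_diff_le[OF H assms(2,6,7)])
    then have "AE \<omega> in M. ereal (a (Y \<omega> - X \<omega>)) \<le> Q \<omega>"
      by (simp add: local_field_abs_diff_commute[OF assms(2), of "Y _"])
    with XW have "AE \<omega> in M. ereal (a (Y \<omega> - W \<omega>)) \<le> Q \<omega>"
      by eventually_elim (rule nonarch_abs_diff_le_trans[OF ultra])
    then have "AE \<omega> in M. ereal (a (Y \<omega> - Z \<omega>)) \<le> Q \<omega>"
      by (rule cond_exp_set_abs_diff_le[OF G assms(2) YM assms(8) W QG])
    with XY have "AE \<omega> in M. ereal (a (X \<omega> - Z \<omega>)) \<le> Q \<omega>"
      by eventually_elim (rule nonarch_abs_diff_le_trans[OF ultra])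
    then show "AE \<omega> in M. cond_norm M G a (\<lambda>\<omega>. X \<omega> - Z \<omega>) \<omega> \<le> cond_norm M G a (\<lambda>\<omega>. X \<omega> - W \<omega>) \<omega>"
      using cond_norm_diff_le_iff[OF G assms(2,6) ZM QG] by (simp add: Q_def)
  qed
qed

end
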